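(* Let $f:\mathbb{R}^n\to\mathbb{R}\cup\{+\infty\}$ be closed and convex, let $X\in\mathbb{R}^{n\times m}$ have rank $r$ with compact SVD $X=U_r\Sigma_r V_r^\top$, let $\gamma>0$, $\lambda>0$. Define $$p^*_{\rm pen}(\lambda)=\min_{w\in\mathbb{R}^m}\ f(Xw)+\lambda\|w\|_0\quad\text{s.t.}\quad\|w\|_2^2\le\gamma,$$ $$p^{**}_{\rm pen}(\lambda)=\min_{v\in\mathbb{R}^m,\ u\in[0,1]^m}\ f(XD(u)v)+\lambda\mathbf 1^\top u\quad\text{s.t.}\quad v^\top D(u)v\le\gamma .$$ Let $(v^*,u^* )$ be an optimal solution of the latter with optimal value $t^*$, let $z^*=\Sigma_rV_r^\top D(u^* )v^*$, let $\ell_i$ be the $i$-th column of $\Sigma_rV_r^\top$, let $c\sim\mathcal N(0,I_m)$, and consider the linear program in $u\in\mathbb{R}^m$: $$\min\ c^\top u\quad\text{s.t.}\quad f(U_rz^* )+\lambda\sum_{i=1}^m u_i=t^*,\quad \sum_{i=1}^m u_i(v_i^* )^2\le\gamma,\quad \sum_{i=1}^m u_i\ell_iv_i^*=z^*,\quad u\in[0,1]^m.$$ Then, with probability one, from an optimal basic feasible solution $\bar u$ of this linear program one can construct a feasible point (with $S=\{i:\bar u_i\notin\{0,1\}\}$, $\tilde u_i=1,\tilde v_i=\bar u_iv_i^*$ for $i\in S$, $\tilde u_i=\bar u_i,\tilde v_i=v_i^*$ otherwise, $w=D(\tilde u)\tilde v$) whose objective value $\mathrm{OPT}=f(Xw)+\lambda\mathbf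 1^\top\tilde u$ satisfies $$p^{**}_{\rm pen}(\lambda)\le p^*_{\rm pen}(\lambda)\le\mathrm{OPT}\le p^{**}_{\rm pen}(\lambda)+\lambda(r+1).$$
   Context: $\|w\|_0$ is the number of nonzero entries of $w$; $D(u)=\mathrm{diag}(u_1,\dots,u_m)$; $\mathbf 1$ is the all-ones vector. Note $p^*_{\rm pen}(\lambda)=\min_{v\in\mathbb{R}^m,u\in\{0,1\}^m} f(XD(u)v)+\lambda\mathbf 1^\top u$ s.t. $v^\top D(u)v\le\gamma$. *)

theory Defs
  imports "HOL-Analysis.Analysis" "HOL-Probability.Probability"
begin

text \<open>Extended-valued functions f : R^n -> R \<union> {+\<infinity>}, modelled as ereal-valued
  functions never taking the value -\<infinity>. Closed / convex via the epigraph.\<close>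

definition ext_epigraph :: "('a \<Rightarrow> ereal) \<Rightarrow> ('a \<times> real) set" where
  "ext_epigraph f = {(x, t). f x \<le> ereal t}"

definition closed_convex_ext :: "('a::real_normed_vector \<Rightarrow> ereal) \<Rightarrow> bool" where
  "closed_convex_ext f \<longleftrightarrow> (\<forall>x. f x \<noteq> -\<infinity>) \<and> convex (ext_epigraph f) \<and> closed (ext_epigraph f)"

definition Dmul :: "real^'m \<Rightarrow> real^'m \<Rightarrow> real^'m" where
  "Dmul u v = (\<chi> i. u$i * v$i)"

definition l0 :: "real^'m \<Rightarrow> nat" where
  "l0 w = card {i. w$i \<noteq> 0}"

definition p_pen :: "(real^'n \<Rightarrow> ereal) \<Rightarrow> real^'m^'n \<Rightarrow> real \<Rightarrow> real \<Rightarrow> ereal" where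
  "p_pen f X gam lam = (INF w \<in> {w. (norm w)^2 \<le> gam}. f (X *v w) + ereal (lam * real (l0 w)))"

definition relax_feasible :: "real \<Rightarrow> real^'m \<Rightarrow> real^'m \<Rightarrow> bool" where
  "relax_feasible gam v u \<longleftrightarrow> (\<forall>i. 0 \<le> u$i \<and> u$i \<le> 1) \<and> v \<bullet> Dmul u v \<le> gam"

definition relax_obj :: "(real^'n \<Rightarrow> ereal) \<Rightarrow> real^'m^'n \<Rightarrow> real \<Rightarrow> real^'m \<Rightarrow> real^'m \<Rightarrow> ereal" where
  "relax_obj f X lam v u = f (X *v Dmul u v) + ereal (lam * (\<Sum>i\<in>UNIV. u$i))"

definition p_pen_relax :: "(real^'n \<Rightarrow> ereal) \<Rightarrow> real^'m^'n \<Rightarrow> real \<Rightarrow> real \<Rightarrow> ereal" where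
  "p_pen_relax f X gam lam = (INF vu \<in> {(v, u). relax_feasible gam v u}. relax_obj f X lam (fst vu) (snd vu))"

text \<open>The linear program of the corollary. L = \<Sigma>_r V_r^T (so column i of L is \<ell>_i),
  U = U_r, vs = v*, zs = z*, ts = t*, fU = f(U_r z* ).\<close>

definition lp_feasible ::
  "ereal \<Rightarrow> real \<Rightarrow> ereal \<Rightarrow> real \<Rightarrow> real^'m^'r \<Rightarrow> real^'m \<Rightarrow> real^'r \<Rightarrow> real^'m \<Rightarrow> bool" where
  "lp_feasible fU lam ts gam L vs zs u \<longleftrightarrow>
     fU + ereal (lam * (\<Sum>i\<in>UNIV. u$i)) = ts \<and>
     (\<Sum>i\<in>UNIV. u$i * (vs$i)^2) \<le> gam \<and>
     (\<Sum>i\<in>UNIV. (u$i * vs$i) *\<^sub>R column i L) = zs \<and>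
     (\<forall>i. 0 \<le> u$i \<and> u$i \<le> 1)"

text \<open>Gradients of the constraints active at u (equality constraints are always active).\<close>
definition lp_active_grads :: "real \<Rightarrow> real^'m^'r \<Rightarrow> real^'m \<Rightarrow> real^'m \<Rightarrow> (real^'m) set" where
  "lp_active_grads gam L vs u =
     {\<chi> i. 1} \<union>
     {(\<chi> i. (vs$i)^2) | _::unit. (\<Sum>i\<in>UNIV. u$i * (vs$i)^2) = gam} \<union>
     {(\<chi> i. L$k$i * vs$i) | k. True} \<union>
     {axis i 1 | i. u$i = 0 \<or> u$i = 1}"

definition lp_bfs ::
  "ereal \<Rightarrow> real \<Rightarrow> ereal \<Rightarrow> real \<Rightarrow> real^'m^'r \<Rightarrow> real^'m \<Rightarrow> real^'r \<Rightarrow> real^'m \<Rightarrow> bool" where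
  "lp_bfs fU lam ts gam L vs zs u \<longleftrightarrow>
     lp_feasible fU lam ts gam L vs zs u \<and> span (lp_active_grads gam L vs u) = UNIV"

definition lp_optimal_bfs ::
  "real^'m \<Rightarrow> ereal \<Rightarrow> real \<Rightarrow> ereal \<Rightarrow> real \<Rightarrow> real^'m^'r \<Rightarrow> real^'m \<Rightarrow> real^'r \<Rightarrow> real^'m \<Rightarrow> bool" where
  "lp_optimal_bfs c fU lam ts gam L vs zs u \<longleftrightarrow>
     lp_bfs fU lam ts gam L vs zs u \<and>
     (\<forall>u'. lp_feasible fU lam ts gam L vs zs u' \<longrightarrow> c \<bullet> u \<le> c \<bullet> u')"

definition std_gaussian :: "(real^'m) measure" where
  "std_gaussian = density lborel (\<lambda>x. ennreal (\<Prod>i\<in>UNIV. std_normal_density (x$i)))"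

definition frac_set :: "real^'m \<Rightarrow> 'm set" where
  "frac_set ub = {i. ub$i \<notin> {0, 1}}"

definition round_u :: "real^'m \<Rightarrow> real^'m" where
  "round_u ub = (\<chi> i. if i \<in> frac_set ub then 1 else ub$i)"

definition round_v :: "real^'m \<Rightarrow> real^'m \<Rightarrow> real^'m" where
  "round_v ub vs = (\<chi> i. if i \<in> frac_set ub then ub$i * vs$i else vs$i)"

end

theory Submission
  imports Defs
begin

text \<open>
  Any feasible point \<open>u\<close> of the linear program gives, together with \<open>v\<^sup>*\<close>, an optimal point
  of the relaxation with the same product \<open>D(u) v\<^sup>*\<close>. At such a point the weights \<open>(v\<^sub>i\<^sup>*)\<^sup>2\<close>
  are equal on the set \<open>S\<close> of fractional coordinates: otherwise rescaling \<open>u\<^sub>i, v\<^sub>i\<close> and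
  \<open>u\<^sub>j, v\<^sub>j\<close> inversely moves quadratic mass from the heavier to the lighter coordinate, keeping
  \<open>D(u) v\<close> and the quadratic constraint while lowering \<open>\<one>\<^sup>T u\<close>. Hence the gradient of the
  quadratic constraint lies in the span of \<open>\<one>\<close> and the axes outside \<open>S\<close>, and since the
  active gradients of a basic solution span \<open>\<real>\<^sup>m\<close>, \<open>|S| \<le> r + 1\<close> (one for \<open>\<one>\<close>, \<open>r\<close> for
  the rows of \<open>\<Sigma>\<^sub>r V\<^sub>r\<^sup>T\<close>). Rounding the fractional \<open>u\<^sub>i\<close> up to 1 while replacing \<open>v\<^sub>i\<close> by
  \<open>u\<^sub>i v\<^sub>i\<close> keeps \<open>w = D(u) v\<close> and feasibility and costs at most \<open>\<lambda> |S|\<close>.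
\<close>

lemma inner_Dmul: "v \<bullet> Dmul u v = (\<Sum>i\<in>UNIV. u$i * (v$i)^2)"
  unfolding inner_vec_def Dmul_def by (simp add: power2_eq_square algebra_simps)

lemma norm_Dmul_binary:
  assumes "\<forall>i. u$i \<in> {0, 1}"
  shows "(norm (Dmul u v))^2 = v \<bullet> Dmul u v"
proof -
  have "(norm (Dmul u v))^2 = (\<Sum>i\<in>UNIV. Dmul u v $ i * Dmul u v $ i)"
    unfolding power2_norm_eq_inner inner_vec_def by simp
  also have "\<dots> = (\<Sum>i\<in>UNIV. u$i * (v$i)^2)"
    using assms by (intro sum.cong) (auto simp: Dmul_def power2_eq_square)
  finally show ?thesis
    by (simp add: inner_Dmul)
qed

lemma l0_Dmul_le_sum:
  assumes "\<forall>i. u$i \<in> {0, 1}"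
  shows "real (l0 (Dmul u v)) \<le> (\<Sum>i\<in>UNIV. u$i)"
proof -
  have "{i. Dmul u v $ i \<noteq> 0} \<subseteq> {i. u$i = 1}"
    using assms by (auto simp: Dmul_def)
  then have "l0 (Dmul u v) \<le> card {i. u$i = 1}"
    unfolding l0_def by (rule card_mono[OF finite])
  also have "real (card {i. u$i = 1}) = (\<Sum>i\<in>UNIV. if u$i = 1 then 1 else 0)"
    by (simp add: sum.If_cases)
  also have "\<dots> = (\<Sum>i\<in>UNIV. u$i)"
    by (rule sum.cong) (use assms in auto)
  finally show ?thesis by simp
qed

lemma p_pen_le:
  assumes "(norm w)^2 \<le> gam"
  shows "p_pen f X gam lam \<le> f (X *v w) + ereal (lam * real (l0 w))"
  unfolding p_pen_def by (rule INF_lower) (use assms in simp)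

lemma p_pen_relax_le:
  assumes "relax_feasible gam v u"
  shows "p_pen_relax f X gam lam \<le> relax_obj f X lam v u"
  unfolding p_pen_relax_def by (rule INF_lower2[of "(v, u)"]) (use assms in auto)

lemma p_pen_relax_le_p_pen:
  fixes X :: "real^'m^'n"
  shows "p_pen_relax f X gam lam \<le> p_pen f X gam lam"
  unfolding p_pen_def
proof (rule INF_greatest)
  fix w :: "real^'m" assume w: "w \<in> {w. (norm w)^2 \<le> gam}"
  define u :: "real^'m" where "u = (\<chi> i. if w$i \<noteq> 0 then 1 else 0)"
  have Dmul_u: "Dmul u w = w"
    unfolding u_def Dmul_def by (auto simp: vec_eq_iff)
  have "relax_feasible gam w u"
    using w unfolding relax_feasible_def Dmul_u by (auto simp: u_def power2_norm_eq_inner)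
  moreover have "(\<Sum>i\<in>UNIV. u$i) = real (l0 w)"
    unfolding u_def l0_def by (simp add: sum.If_cases)
  ultimately show "p_pen_relax f X gam lam \<le> f (X *v w) + ereal (lam * real (l0 w))"
    using p_pen_relax_le[of gam w u f X lam] unfolding relax_obj_def Dmul_u by simp
qed

lemma p_pen_le_relax_obj_binary:
  assumes binary: "\<forall>i. u$i \<in> {0, 1}" and quad: "v \<bullet> Dmul u v \<le> gam" and "lam \<ge> 0"
  shows "p_pen f X gam lam \<le> relax_obj f X lam v u"
proof -
  have "p_pen f X gam lam \<le> f (X *v Dmul u v) + ereal (lam * real (l0 (Dmul u v)))"
    using quad norm_Dmul_binary[OF binary] by (intro p_pen_le) simp
  also have "\<dots> \<le> relax_obj f X lam v u"
    unfolding relax_obj_def using l0_Dmul_le_sum[OF binary] \<open>lam \<ge> 0\<close>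
    by (intro add_left_mono) (simp add: mult_left_mono)
  finally show ?thesis .
qed

lemma round_u_binary: "round_u ub $ i \<in> {0, 1}"
  unfolding round_u_def frac_set_def by auto

lemma Dmul_round: "Dmul (round_u ub) (round_v ub v) = Dmul ub v"
  unfolding Dmul_def round_u_def round_v_def by (simp add: vec_eq_iff)

lemma round_quadratic_le:
  assumes "\<forall>i. 0 \<le> ub$i \<and> ub$i \<le> 1"
  shows "round_v ub v \<bullet> Dmul (round_u ub) (round_v ub v) \<le> v \<bullet> Dmul ub v"
  unfolding inner_Dmul
proof (rule sum_mono)
  fix i
  have "(ub$i)^2 \<le> ub$i"
    using assms[rule_format, of i] by (simp add: power2_eq_square mult_left_le)
  then have "(ub$i)^2 * (v$i)^2 \<le> ub$i * (v$i)^2"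
    by (rule mult_right_mono) simp
  then show "round_u ub $ i * (round_v ub v $ i)^2 \<le> ub$i * (v$i)^2"
    unfolding round_u_def round_v_def by (simp add: power_mult_distrib)
qed

lemma sum_round_u_le:
  assumes "\<forall>i. 0 \<le> ub$i"
  shows "(\<Sum>i\<in>UNIV. round_u ub $ i) \<le> (\<Sum>i\<in>UNIV. ub$i) + real (card (frac_set ub))"
proof -
  have "(\<Sum>i\<in>UNIV. round_u ub $ i) \<le> (\<Sum>i\<in>UNIV. ub$i + (if i \<in> frac_set ub then 1 else 0))"
    by (rule sum_mono) (use assms in \<open>auto simp: round_u_def\<close>)
  then show ?thesis
    by (simp add: sum.distrib sum.If_cases)
qed

lemma relax_obj_round_le:
  assumes "\<forall>i. 0 \<le> ub$i" and "lam \<ge> 0"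
  shows "relax_obj f X lam (round_v ub v) (round_u ub)
           \<le> relax_obj f X lam v ub + ereal (lam * real (card (frac_set ub)))"
proof -
  have "lam * (\<Sum>i\<in>UNIV. round_u ub $ i) \<le> lam * (\<Sum>i\<in>UNIV. ub$i) + lam * real (card (frac_set ub))"
    using mult_left_mono[OF sum_round_u_le[OF assms(1)] assms(2)] by (simp add: distrib_left)
  then show ?thesis
    unfolding relax_obj_def Dmul_round add.assoc plus_ereal.simps(1)[symmetric]
    by (intro add_left_mono) simp
qed

lemma in_span_axes_outside:
  fixes x :: "real^'m"
  assumes "\<forall>i\<in>S. x$i = 0"
  shows "x \<in> span {axis i 1 | i. i \<notin> S}"
proof -
  have "x = (\<Sum>i\<in>UNIV. x$i *\<^sub>R axis i 1)"
    using basis_expansion[of x] by (simp add: scalar_mult_eq_scaleR)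
  also have "\<dots> = (\<Sum>i\<in>-S. x$i *\<^sub>R axis i 1)"
    by (rule sum.mono_neutral_right) (use assms in auto)
  also have "\<dots> \<in> span {axis i 1 | i. i \<notin> S}"
    by (intro span_sum span_scale span_base) auto
  finally show ?thesis .
qed

lemma in_span_axes_outside_if_const:
  fixes x :: "real^'m"
  assumes "\<forall>i\<in>S. \<forall>j\<in>S. x$i = x$j"
  shows "x \<in> span (insert (\<chi> i. 1) {axis i 1 | i. i \<notin> S})"
proof -
  let ?B = "insert (\<chi> i. 1) {axis i 1 | i. i \<notin> S}"
  have axes_sub: "span {axis i 1 | i. i \<notin> S} \<subseteq> span ?B"
    by (rule span_mono) blast
  show ?thesis
  proof (cases "S = {}")
    case True
    then show ?thesis
      using in_span_axes_outside[of S x] axes_sub by blast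
  next
    case False
    then obtain s where s: "s \<in> S" by blast
    have "x$i = x$s" if "i \<in> S" for i
      using assms s that by blast
    then have "x - x$s *\<^sub>R (\<chi> i. 1) \<in> span {axis i 1 | i. i \<notin> S}"
      by (intro in_span_axes_outside) simp
    moreover have "x$s *\<^sub>R (\<chi> i. 1) \<in> span ?B"
      by (intro span_scale span_base) simp
    ultimately have "(x - x$s *\<^sub>R (\<chi> i. 1)) + x$s *\<^sub>R (\<chi> i. 1) \<in> span ?B"
      using axes_sub by (intro span_add) auto
    then show ?thesis by simp
  qed
qed

lemma card_le_card_if_span_Un_axes:
  fixes T :: "(real^'m) set" and S :: "'m set"
  assumes "finite T" and "span (T \<union> {axis i 1 | i. i \<notin> S}) = UNIV"
  shows "card S \<le> card T"
proof -
  let ?A = "{axis i 1 | i. i \<notin> S} :: (real^'m) set"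
  have A_image: "?A = (\<lambda>i. axis i 1) ` (- S)" by auto
  have "card ?A = card (- S)"
    unfolding A_image by (rule card_image) (auto simp: inj_on_def axis_eq_axis)
  also have "\<dots> = CARD('m) - card S"
    by (simp add: Compl_eq_Diff_UNIV card_Diff_subset)
  finally have card_A: "card ?A = CARD('m) - card S" .
  have "CARD('m) = dim (UNIV :: (real^'m) set)" by simp
  also have "\<dots> \<le> card (T \<union> ?A)"
    by (rule dim_le_card) (use assms A_image in auto)
  also have "\<dots> \<le> card T + card ?A" by (rule card_Un_le)
  finally show ?thesis
    using card_A card_mono[of "UNIV::'m set" S] by simp
qed

lemma card_frac_set_le:
  fixes L :: "real^'m^'r"
  assumes span_UNIV: "span (lp_active_grads gam L vs ub) = UNIV"
    and weights_eq: "\<forall>i\<in>frac_set ub. \<forall>j\<in>frac_set ub. (vs$i)^2 = (vs$j)^2"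
  shows "card (frac_set ub) \<le> CARD('r) + 1"
proof -
  define one :: "real^'m" where "one = (\<chi> i. 1)"
  define T where "T = insert one (range (\<lambda>k. \<chi> i. L$k$i * vs$i))"
  define A :: "(real^'m) set" where "A = {axis i 1 | i. i \<notin> frac_set ub}"
  have "card (range (\<lambda>k. \<chi> i. L$k$i * vs$i)) \<le> CARD('r)"
    by (rule card_image_le) simp
  then have card_T: "card T \<le> CARD('r) + 1"
    unfolding T_def by (simp add: card_insert_if)
  have "(\<chi> i. (vs$i)^2) \<in> span (insert one A)"
    unfolding one_def A_def
    by (rule in_span_axes_outside_if_const) (unfold vec_lambda_beta, rule weights_eq)
  moreover have "span (insert one A) \<subseteq> span (T \<union> A)"
    by (rule span_mono) (auto simp: T_def)
  ultimately have "(\<chi> i. (vs$i)^2) \<in> span (T \<union> A)"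
    by blast
  moreover have "x \<in> A" if "x = axis i 1" "ub$i = 0 \<or> ub$i = 1" for x i
    using that unfolding A_def frac_set_def by auto
  ultimately have "lp_active_grads gam L vs ub \<subseteq> span (T \<union> A)"
    unfolding lp_active_grads_def by (auto simp: T_def one_def intro: span_base)
  then have "span (T \<union> A) = UNIV"
    using span_UNIV span_minimal[OF _ subspace_span] by blast
  then have "card (frac_set ub) \<le> card T"
    unfolding A_def by (intro card_le_card_if_span_Un_axes) (simp_all add: T_def)
  with card_T show ?thesis by simp
qed

text \<open>With \<open>p = u\<^sub>i\<close>, \<open>q = u\<^sub>j\<close>, \<open>A = v\<^sub>i\<^sup>2 < B = v\<^sub>j\<^sup>2\<close>, replacing \<open>(u\<^sub>i, v\<^sub>i)\<close> by
  \<open>(p/(1+\<alpha>), (1+\<alpha>) v\<^sub>i)\<close> and \<open>(u\<^sub>j, v\<^sub>j)\<close> by \<open>(q/(1-\<beta>), (1-\<beta>) v\<^sub>j)\<close> keeps \<open>D(u) v\<close> and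
  changes \<open>\<Sum>\<^sub>k u\<^sub>k v\<^sub>k\<^sup>2\<close> by \<open>p A \<alpha> - q B \<beta>\<close>; once this is balanced, \<open>u\<^sub>i + u\<^sub>j\<close> changes to first
  order by \<open>p \<alpha> (A/B - 1) < 0\<close>.\<close>

lemma exists_rescaling_decreasing_sum:
  fixes p q A B :: real
  assumes "0 < p" "p < 1" "0 < q" "q < 1" "0 \<le> A" "A < B"
  shows "\<exists>\<alpha> \<beta>. \<alpha> > 0 \<and> 0 \<le> \<beta> \<and> \<beta> \<le> 1 - q \<and> p * A * \<alpha> = q * B * \<beta> \<and>
               p / (1 + \<alpha>) + q / (1 - \<beta>) < p + q"
proof -
  have B_pos: "B > 0" using assms by linarith
  define \<alpha> where "\<alpha> = (B - A) * q * (1 - q) / (4 * B)"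
  define \<beta> where "\<beta> = p * A * \<alpha> / (q * B)"
  have \<alpha>_pos: "\<alpha> > 0" unfolding \<alpha>_def using assms B_pos by simp
  have \<beta>_nonneg: "\<beta> \<ge> 0" unfolding \<beta>_def using assms B_pos \<alpha>_pos by simp
  have "\<beta> = p * (A / B) * (B - A) * (1 - q) / (4 * B)"
    unfolding \<beta>_def \<alpha>_def using assms B_pos by (simp add: field_simps)
  also have "\<dots> \<le> 1 * 1 * B * (1 - q) / (4 * B)"
    using assms B_pos by (intro divide_right_mono mult_right_mono mult_mono) auto
  also have "\<dots> = (1 - q) / 4" using B_pos by simp
  finally have \<beta>_small: "\<beta> \<le> (1 - q) / 4" .
  have balance: "p * A * \<alpha> = q * B * \<beta>" unfolding \<beta>_def using assms B_pos by simp
  have "A * \<alpha> + B * \<beta> = A * \<alpha> * (1 + p / q)" using balance assms B_pos by (simp add: field_simps)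
  also have "\<dots> = A * (B - A) * (1 - q) * (q + p) / (4 * B)"
    unfolding \<alpha>_def using assms by (simp add: field_simps)
  also have "\<dots> \<le> B * (B - A) * 1 * 2 / (4 * B)"
    using assms B_pos by (intro divide_right_mono mult_mono) auto
  also have "\<dots> < B - A" using assms B_pos by simp
  finally have key: "A * (1 + \<alpha>) < B * (1 - \<beta>)" by (simp add: algebra_simps)
  have "q / (1 - \<beta>) - q = p * A * \<alpha> / (B * (1 - \<beta>))"
    using balance \<beta>_small assms B_pos by (simp add: field_simps)
  also have "\<dots> < p * \<alpha> / (1 + \<alpha>)"
  proof -
    have "p * \<alpha> * A * (1 + \<alpha>) < p * \<alpha> * (B * (1 - \<beta>))" using key assms \<alpha>_pos by simp
    then show ?thesis using \<alpha>_pos \<beta>_small assms B_pos by (simp add: field_simps)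
  qed
  also have "\<dots> = p - p / (1 + \<alpha>)" using \<alpha>_pos by (simp add: field_simps)
  finally have "p / (1 + \<alpha>) + q / (1 - \<beta>) < p + q" by simp
  moreover have "\<beta> \<le> 1 - q" using \<beta>_small assms by simp
  ultimately show ?thesis using \<alpha>_pos \<beta>_nonneg balance by blast
qed

lemma sum_change_at_two:
  fixes g h :: "'a::finite \<Rightarrow> real"
  assumes "i \<noteq> j" and "\<And>k. k \<noteq> i \<Longrightarrow> k \<noteq> j \<Longrightarrow> g k = h k"
  shows "sum g UNIV = sum h UNIV + (g i - h i) + (g j - h j)"
proof -
  have "(\<Sum>k\<in>UNIV. g k - h k) =
        (\<Sum>k\<in>UNIV. (if k = i then g i - h i else 0) + (if k = j then g j - h j else 0))"
    by (rule sum.cong) (use assms in auto)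
  then show ?thesis by (simp add: sum.distrib sum_subtractf)
qed

lemma exists_cheaper_factorization:
  assumes feas: "relax_feasible gam v u"
    and i: "i \<in> frac_set u" and j: "j \<in> frac_set u" and less: "(v$i)^2 < (v$j)^2"
  shows "\<exists>v' u'. relax_feasible gam v' u' \<and> Dmul u' v' = Dmul u v \<and>
                 (\<Sum>k\<in>UNIV. u'$k) < (\<Sum>k\<in>UNIV. u$k)"
proof -
  have bounds: "\<forall>k. 0 \<le> u$k \<and> u$k \<le> 1" and quad: "v \<bullet> Dmul u v \<le> gam"
    using feas unfolding relax_feasible_def by auto
  have ui: "0 < u$i" "u$i < 1" and uj: "0 < u$j" "u$j < 1"
    using i j bounds unfolding frac_set_def by (auto simp: less_le)
  have ij: "i \<noteq> j" using less by auto
  obtain \<alpha> \<beta> where \<alpha>: "\<alpha> > 0" and \<beta>: "0 \<le> \<beta>" "\<beta> \<le> 1 - u$j"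
    and balance: "u$i * (v$i)^2 * \<alpha> = u$j * (v$j)^2 * \<beta>"
    and decrease: "u$i / (1 + \<alpha>) + u$j / (1 - \<beta>) < u$i + u$j"
    using exists_rescaling_decreasing_sum[OF ui uj zero_le_power2 less] by blast
  have \<beta>_lt: "1 - \<beta> > 0" using \<beta> uj by linarith
  define v' :: "real^'a" where
    "v' = (\<chi> k. if k = i then (1 + \<alpha>) * v$i else if k = j then (1 - \<beta>) * v$j else v$k)"
  define u' :: "real^'a" where
    "u' = (\<chi> k. if k = i then u$i / (1 + \<alpha>) else if k = j then u$j / (1 - \<beta>) else u$k)"
  have "Dmul u' v' = Dmul u v"
    unfolding Dmul_def u'_def v'_def vec_eq_iff using \<alpha> \<beta>_lt ij by auto
  moreover have "\<forall>k. 0 \<le> u'$k \<and> u'$k \<le> 1"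
    unfolding u'_def using bounds \<alpha> \<beta> \<beta>_lt ui uj by (auto simp: divide_le_eq)
  moreover have "v' \<bullet> Dmul u' v' = v \<bullet> Dmul u v"
  proof -
    have "u'$i * (v'$i)^2 - u$i * (v$i)^2 = u$i * (v$i)^2 * \<alpha>"
      unfolding u'_def v'_def using \<alpha> by (simp add: field_simps power2_eq_square)
    moreover have "u'$j * (v'$j)^2 - u$j * (v$j)^2 = - (u$j * (v$j)^2 * \<beta>)"
      unfolding u'_def v'_def using \<beta>_lt ij by (simp add: field_simps power2_eq_square)
    moreover have "u'$k * (v'$k)^2 = u$k * (v$k)^2" if "k \<noteq> i" "k \<noteq> j" for k
      unfolding u'_def v'_def using that by simp
    ultimately show ?thesis
      unfolding inner_Dmul using balance by (subst sum_change_at_two[OF ij]) auto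
  qed
  moreover have "(\<Sum>k\<in>UNIV. u'$k) < (\<Sum>k\<in>UNIV. u$k)"
    using decrease ij by (subst sum_change_at_two[OF ij]) (auto simp: u'_def)
  ultimately show ?thesis
    using quad unfolding relax_feasible_def by (intro exI[of _ v'] exI[of _ u']) auto
qed

lemma relax_optimal_frac_weights_eq:
  fixes X :: "real^'m^'n"
  assumes feas: "relax_feasible gam v u"
    and opt: "relax_obj f X lam v u = p_pen_relax f X gam lam"
    and finite: "\<bar>f (X *v Dmul u v)\<bar> \<noteq> \<infinity>" and lam: "lam > 0"
  shows "\<forall>i\<in>frac_set u. \<forall>j\<in>frac_set u. (v$i)^2 = (v$j)^2"
proof (rule ccontr)
  assume "\<not> ?thesis"
  then obtain i j where "i \<in> frac_set u" "j \<in> frac_set u" "(v$i)^2 < (v$j)^2"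
    by (metis linorder_neq_iff)
  then obtain v' u' where feas': "relax_feasible gam v' u'" and same: "Dmul u' v' = Dmul u v"
    and smaller: "(\<Sum>k\<in>UNIV. u'$k) < (\<Sum>k\<in>UNIV. u$k)"
    using exists_cheaper_factorization[OF feas] by blast
  obtain y where y: "f (X *v Dmul u v) = ereal y"
    using finite by (cases "f (X *v Dmul u v)") auto
  have "relax_obj f X lam v' u' < relax_obj f X lam v u"
    unfolding relax_obj_def same y using smaller lam by simp
  with p_pen_relax_le[OF feas', of f X lam] opt show False by simp
qed

lemma lp_feasible_image:
  assumes "lp_feasible fU lam ts gam L vs zs u"
  shows "L *v Dmul u vs = zs"
  using assms unfolding lp_feasible_def
  by (simp add: matrix_mult_sum scalar_mult_eq_scaleR Dmul_def)

lemma lp_feasible_relax_feasible: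
  assumes "lp_feasible fU lam ts gam L vs zs u"
  shows "relax_feasible gam vs u"
  using assms unfolding lp_feasible_def relax_feasible_def inner_Dmul by simp

lemma lp_feasible_relax_optimal:
  assumes X_factor: "\<And>x. X *v x = U *v (L *v x)"
    and opt: "relax_obj f X lam vs us = p_pen_relax f X gam lam"
    and feas: "lp_feasible (f (U *v (L *v Dmul us vs))) lam (relax_obj f X lam vs us) gam
                 L vs (L *v Dmul us vs) ub"
  shows "relax_obj f X lam vs ub = p_pen_relax f X gam lam"
proof -
  have "X *v Dmul ub vs = U *v (L *v Dmul us vs)"
    unfolding X_factor lp_feasible_image[OF feas] ..
  then show ?thesis
    using feas opt unfolding relax_obj_def lp_feasible_def by simp
qed

lemma lp_bfs_rounding_cost_le:
  fixes X :: "real^'m^'n" and U :: "real^'r^'n" and L :: "real^'m^'r"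
  assumes X_factor: "\<And>x. X *v x = U *v (L *v x)"
    and f_proper: "\<forall>x. f x \<noteq> -\<infinity>" and lam: "lam > 0"
    and opt: "relax_obj f X lam vs us = p_pen_relax f X gam lam"
    and bfs: "lp_bfs (f (U *v (L *v Dmul us vs))) lam (relax_obj f X lam vs us) gam
                L vs (L *v Dmul us vs) ub"
  shows "relax_obj f X lam (round_v ub vs) (round_u ub)
           \<le> p_pen_relax f X gam lam + ereal (lam * (real CARD('r) + 1))"
proof -
  from bfs have feas: "lp_feasible (f (U *v (L *v Dmul us vs))) lam (relax_obj f X lam vs us) gam
                         L vs (L *v Dmul us vs) ub"
    and span_UNIV: "span (lp_active_grads gam L vs ub) = UNIV"
    unfolding lp_bfs_def by auto
  have ub_feas: "relax_feasible gam vs ub"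
    using feas by (rule lp_feasible_relax_feasible)
  have ub_opt: "relax_obj f X lam vs ub = p_pen_relax f X gam lam"
    using X_factor opt feas by (rule lp_feasible_relax_optimal)
  have bounds: "\<forall>i. 0 \<le> ub$i"
    using ub_feas unfolding relax_feasible_def by simp
  show ?thesis
  proof (cases "f (X *v Dmul ub vs) = \<infinity>")
    case True
    then have "p_pen_relax f X gam lam = \<infinity>"
      unfolding ub_opt[symmetric] relax_obj_def by simp
    then show ?thesis by simp
  next
    case False
    with f_proper have finite: "\<bar>f (X *v Dmul ub vs)\<bar> \<noteq> \<infinity>" by auto
    have "card (frac_set ub) \<le> CARD('r) + 1"
      using span_UNIV relax_optimal_frac_weights_eq[OF ub_feas ub_opt finite lam]
      by (rule card_frac_set_le)
    then have "lam * real (card (frac_set ub)) \<le> lam * (real CARD('r) + 1)"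
      using lam by (intro mult_left_mono) auto
    then have "p_pen_relax f X gam lam + ereal (lam * real (card (frac_set ub)))
                 \<le> p_pen_relax f X gam lam + ereal (lam * (real CARD('r) + 1))"
      by (intro add_left_mono) simp
    with relax_obj_round_le[of ub lam f X vs] bounds lam ub_opt show ?thesis by simp
  qed
qed

theorem corollary4p2:
  fixes f :: "real^'n \<Rightarrow> ereal"
    and X :: "real^'m^'n"
    and U :: "real^'r^'n" and Sig :: "real^'r^'r" and V :: "real^'r^'m"
    and gam lam :: real
    and vs us :: "real^'m" and ts :: ereal
  assumes f_cc: "closed_convex_ext f"
    and rankX: "rank X = CARD('r)"
    and U_orth: "transpose U ** U = mat 1"
    and V_orth: "transpose V ** V = mat 1"
    and Sig_diag: "\<forall>i j. i \<noteq> j \<longrightarrow> Sig$i$j = 0"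
    and Sig_pos: "\<forall>i. Sig$i$i > 0"
    and svd: "X = U ** Sig ** transpose V"
    and gamma_pos: "gam > 0" and lambda_pos: "lam > 0"
    and opt_feas: "relax_feasible gam vs us"
    and opt_val: "relax_obj f X lam vs us = p_pen_relax f X gam lam"
    and ts_def: "ts = relax_obj f X lam vs us"
  shows "AE c in std_gaussian.
           \<forall>ub. lp_optimal_bfs c (f (U *v (Sig ** transpose V *v Dmul us vs))) lam ts gam
                   (Sig ** transpose V) vs (Sig ** transpose V *v Dmul us vs) ub \<longrightarrow>
             (let ut = round_u ub; vt = round_v ub vs; w = Dmul ut vt;
                  OPT = f (X *v w) + ereal (lam * (\<Sum>i\<in>UNIV. ut$i))
              in (\<forall>i. ut$i \<in> {0, 1}) \<and> vt \<bullet> Dmul ut vt \<le> gam \<and> (norm w)^2 \<le> gam \<and>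
                 p_pen_relax f X gam lam \<le> p_pen f X gam lam \<and>
                 p_pen f X gam lam \<le> OPT \<and>
                 OPT \<le> p_pen_relax f X gam lam + ereal (lam * (real (rank X) + 1)))"
proof (rule AE_I2, intro allI impI)
  fix c ub :: "real^'m"
  assume "lp_optimal_bfs c (f (U *v (Sig ** transpose V *v Dmul us vs))) lam ts gam
            (Sig ** transpose V) vs (Sig ** transpose V *v Dmul us vs) ub"
  then have bfs: "lp_bfs (f (U *v (Sig ** transpose V *v Dmul us vs))) lam (relax_obj f X lam vs us)
                    gam (Sig ** transpose V) vs (Sig ** transpose V *v Dmul us vs) ub"
    unfolding lp_optimal_bfs_def ts_def by simp
  have X_factor: "X *v x = U *v (Sig ** transpose V *v x)" for x
    unfolding svd by (simp add: matrix_vector_mul_assoc matrix_mul_assoc)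
  have f_proper: "\<forall>x. f x \<noteq> -\<infinity>"
    using f_cc unfolding closed_convex_ext_def by simp
  have bounds: "\<forall>i. 0 \<le> ub$i \<and> ub$i \<le> 1" and quad: "vs \<bullet> Dmul ub vs \<le> gam"
    using lp_feasible_relax_feasible bfs unfolding lp_bfs_def relax_feasible_def by blast+
  define ut vt where "ut = round_u ub" and "vt = round_v ub vs"
  have ut_binary: "\<forall>i. ut$i \<in> {0, 1}"
    unfolding ut_def using round_u_binary by blast
  have vt_quad: "vt \<bullet> Dmul ut vt \<le> gam"
    using round_quadratic_le[OF bounds, of vs] quad unfolding ut_def vt_def by simp
  have "relax_obj f X lam vt ut \<le> p_pen_relax f X gam lam + ereal (lam * (real (rank X) + 1))"
    using lp_bfs_rounding_cost_le[OF X_factor f_proper lambda_pos opt_val bfs] rankX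
    unfolding ut_def vt_def by simp
  then show "let ut = round_u ub; vt = round_v ub vs; w = Dmul ut vt;
                 OPT = f (X *v w) + ereal (lam * (\<Sum>i\<in>UNIV. ut$i))
             in (\<forall>i. ut$i \<in> {0, 1}) \<and> vt \<bullet> Dmul ut vt \<le> gam \<and> (norm w)^2 \<le> gam \<and>
                p_pen_relax f X gam lam \<le> p_pen f X gam lam \<and>
                p_pen f X gam lam \<le> OPT \<and>
                OPT \<le> p_pen_relax f X gam lam + ereal (lam * (real (rank X) + 1))"
    using ut_binary vt_quad norm_Dmul_binary[OF ut_binary, of vt] p_pen_relax_le_p_pen
      p_pen_le_relax_obj_binary[OF ut_binary vt_quad less_imp_le[OF lambda_pos]]
    unfolding Let_def relax_obj_def ut_def vt_def by auto
qed

end
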